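(* Consider an instance of the Balancing with Conflicts and Friendship game with $n$ players, $m$ machines and parameters $\alpha>0$, $\beta,\gamma\ge0$. (i) If $\alpha\ge\gamma$, the instance is $(\Lambda,0)$-semi-smooth, where $$\Lambda=1+\frac{m-1}{n}+\frac\beta\alpha\cdot\frac{m-1}{m}+\frac\gamma\alpha\left(\frac{m-1}{m}-\frac{m-1}{n}\right).$$ Hence its price of total anarchy is at most $\Lambda$. (ii) The bound in (i) is tight. For every $m\ge1$ and every $\alpha\ge\gamma$ and $\beta$, take $n=m^2$ players partitioned into $m$ disjoint groups of $m$ players. Let $E^+$ join every two players in the same group and $E^-$ join every two players in different groups. Then the mixed profile in which each player independently chooses each machine with probability $\frac1m$ is a mixed Nash equilibrium whose expected social cost equals $\Lambda\, c(\vec s^* )$. (iii) If $\alpha<\gamma$, the instance is $$\left(1+\frac\beta\alpha\cdot\frac{m-1}{m}+\frac\gamma\alpha\cdot\frac{m-1}{m},\;0\right)\text{-semi-smooth.}$$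
   Context: An instance of the Balancing with Conflicts and Friendship game consists of: - players $N=\{1,\dots,n\}$; - machines $M=\{1,\dots,m\}$; - two disjoint sets $E^+$ (friendship edges) and $E^-$ (conflict edges) of unordered pairs of distinct players; - parameters $\alpha>0$, $\beta\ge0$, $\gamma\ge0$. A state is $\vec s\in M^n$, with $X_k(\vec s)=\{i:s_i=k\}$ and $x_k(\vec s)=|X_k(\vec s)|$. The cost of player $i$ with $s_i=k$ is $$c_i(\vec s)=\alpha x_k(\vec s)+\beta\cdot\#\{j\in X_k(\vec s):\{i,j\}\in E^-\}+\gamma\cdot\#\{j\notin X_k(\vec s):\{i,j\}\in E^+\}.$$ The social cost is $c(\vec s)=\sum_ic_i(\vec s)$, and $\vec s^*$ minimizes $c$. A cost-minimization game is $(\lambda,\mu)$-semi-smooth if there exist probability distributions $\sigma_i$ over each player's strategies such that for every state $\vec s$, $$\sum_i\mathbf E_{s_i'\sim\sigma_i}[c_i(s_i',\vec s_{-i})]\le\lambda c(\vec s^* )+\mu c(\vec s).$$ A coarse correlated equilibrium (CCE) is a distribution $\sigma$ over states with $\mathbf E_{\vec s\sim\sigma}[c_i(\vec s)]\le\mathbf E_{\vec s\sim\sigma}[c_i(s_i',\vec s_{-i})]$ for all $i$ and $s_i'$. A mixed Nash equilibrium is a CCE that is a product distribution. The price of total anarchy is $\sup_\sigma\mathbf E_{\vec s\sim\sigma}[c(\vec s)]/c(\vec s^* )$ over CCE $\sigma$. *)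

theory Defs
  imports Main "HOL-Library.FuncSet" Complex_Main
begin

text \<open>Players are 0..<n, machines are 0..<m. An edge is an unordered pair {i,j}
 of distinct players, represented as a two-element set.
 A state is an element of the extensional function space states n m.\<close>

definition states :: "nat \<Rightarrow> nat \<Rightarrow> (nat \<Rightarrow> nat) set" where
  "states n m = PiE {..<n} (\<lambda>_. {..<m})"

definition valid_instance :: "nat \<Rightarrow> nat \<Rightarrow> nat set set \<Rightarrow> nat set set \<Rightarrow> real \<Rightarrow> real \<Rightarrow> real \<Rightarrow> bool" where
  "valid_instance n m Ep Em \<alpha> \<beta> \<gamma> \<longleftrightarrow>
     1 \<le> n \<and> 1 \<le> m \<and>
     Ep \<subseteq> {{i, j} | i j. i < n \<and> j < n \<and> i \<noteq> j} \<and>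
     Em \<subseteq> {{i, j} | i j. i < n \<and> j < n \<and> i \<noteq> j} \<and>
     Ep \<inter> Em = {} \<and> \<alpha> > 0 \<and> \<beta> \<ge> 0 \<and> \<gamma> \<ge> 0"

definition load :: "nat \<Rightarrow> (nat \<Rightarrow> nat) \<Rightarrow> nat \<Rightarrow> nat" where
  "load n s k = card {j. j < n \<and> s j = k}"

definition pcost :: "nat \<Rightarrow> nat set set \<Rightarrow> nat set set \<Rightarrow> real \<Rightarrow> real \<Rightarrow> real
    \<Rightarrow> (nat \<Rightarrow> nat) \<Rightarrow> nat \<Rightarrow> real" where
  "pcost n Ep Em \<alpha> \<beta> \<gamma> s i =
     \<alpha> * real (load n s (s i))
     + \<beta> * real (card {j. j < n \<and> s j = s i \<and> {i, j} \<in> Em})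
     + \<gamma> * real (card {j. j < n \<and> s j \<noteq> s i \<and> {i, j} \<in> Ep})"

definition social_cost :: "nat \<Rightarrow> nat set set \<Rightarrow> nat set set \<Rightarrow> real \<Rightarrow> real \<Rightarrow> real
    \<Rightarrow> (nat \<Rightarrow> nat) \<Rightarrow> real" where
  "social_cost n Ep Em \<alpha> \<beta> \<gamma> s = (\<Sum>i<n. pcost n Ep Em \<alpha> \<beta> \<gamma> s i)"

definition opt_cost :: "nat \<Rightarrow> nat \<Rightarrow> nat set set \<Rightarrow> nat set set \<Rightarrow> real \<Rightarrow> real \<Rightarrow> real \<Rightarrow> real" where
  "opt_cost n m Ep Em \<alpha> \<beta> \<gamma> = Min (social_cost n Ep Em \<alpha> \<beta> \<gamma> ` states n m)"

definition machine_dist :: "nat \<Rightarrow> (nat \<Rightarrow> real) \<Rightarrow> bool" where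
  "machine_dist m p \<longleftrightarrow> (\<forall>k<m. p k \<ge> 0) \<and> (\<Sum>k<m. p k) = 1"

definition semi_smooth :: "nat \<Rightarrow> nat \<Rightarrow> nat set set \<Rightarrow> nat set set \<Rightarrow> real \<Rightarrow> real \<Rightarrow> real
    \<Rightarrow> real \<Rightarrow> real \<Rightarrow> bool" where
  "semi_smooth n m Ep Em \<alpha> \<beta> \<gamma> lam mu \<longleftrightarrow>
     (\<exists>\<sigma> :: nat \<Rightarrow> nat \<Rightarrow> real. (\<forall>i<n. machine_dist m (\<sigma> i)) \<and>
        (\<forall>s\<in>states n m.
           (\<Sum>i<n. \<Sum>k<m. \<sigma> i k * pcost n Ep Em \<alpha> \<beta> \<gamma> (s(i := k)) i)
             \<le> lam * opt_cost n m Ep Em \<alpha> \<beta> \<gamma> + mu * social_cost n Ep Em \<alpha> \<beta> \<gamma> s))"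

definition state_dist :: "nat \<Rightarrow> nat \<Rightarrow> ((nat \<Rightarrow> nat) \<Rightarrow> real) \<Rightarrow> bool" where
  "state_dist n m w \<longleftrightarrow> (\<forall>s\<in>states n m. w s \<ge> 0) \<and> (\<Sum>s\<in>states n m. w s) = 1"

definition expected :: "nat \<Rightarrow> nat \<Rightarrow> ((nat \<Rightarrow> nat) \<Rightarrow> real) \<Rightarrow> ((nat \<Rightarrow> nat) \<Rightarrow> real) \<Rightarrow> real" where
  "expected n m w f = (\<Sum>s\<in>states n m. w s * f s)"

definition is_CCE :: "nat \<Rightarrow> nat \<Rightarrow> nat set set \<Rightarrow> nat set set \<Rightarrow> real \<Rightarrow> real \<Rightarrow> real
    \<Rightarrow> ((nat \<Rightarrow> nat) \<Rightarrow> real) \<Rightarrow> bool" where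
  "is_CCE n m Ep Em \<alpha> \<beta> \<gamma> w \<longleftrightarrow> state_dist n m w \<and>
     (\<forall>i<n. \<forall>k<m.
        expected n m w (\<lambda>s. pcost n Ep Em \<alpha> \<beta> \<gamma> s i)
          \<le> expected n m w (\<lambda>s. pcost n Ep Em \<alpha> \<beta> \<gamma> (s(i := k)) i))"

definition product_dist :: "nat \<Rightarrow> (nat \<Rightarrow> nat \<Rightarrow> real) \<Rightarrow> (nat \<Rightarrow> nat) \<Rightarrow> real" where
  "product_dist n \<sigma> s = (\<Prod>i<n. \<sigma> i (s i))"

definition is_mixed_NE :: "nat \<Rightarrow> nat \<Rightarrow> nat set set \<Rightarrow> nat set set \<Rightarrow> real \<Rightarrow> real \<Rightarrow> real
    \<Rightarrow> (nat \<Rightarrow> nat \<Rightarrow> real) \<Rightarrow> bool" where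
  "is_mixed_NE n m Ep Em \<alpha> \<beta> \<gamma> \<sigma> \<longleftrightarrow> (\<forall>i<n. machine_dist m (\<sigma> i)) \<and>
     is_CCE n m Ep Em \<alpha> \<beta> \<gamma> (product_dist n \<sigma>)"

definition PoTA_le :: "nat \<Rightarrow> nat \<Rightarrow> nat set set \<Rightarrow> nat set set \<Rightarrow> real \<Rightarrow> real \<Rightarrow> real \<Rightarrow> real \<Rightarrow> bool" where
  "PoTA_le n m Ep Em \<alpha> \<beta> \<gamma> B \<longleftrightarrow>
     (\<forall>w. is_CCE n m Ep Em \<alpha> \<beta> \<gamma> w \<longrightarrow>
        expected n m w (social_cost n Ep Em \<alpha> \<beta> \<gamma>) \<le> B * opt_cost n m Ep Em \<alpha> \<beta> \<gamma>)"

definition Lam :: "nat \<Rightarrow> nat \<Rightarrow> real \<Rightarrow> real \<Rightarrow> real \<Rightarrow> real" where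
  "Lam n m \<alpha> \<beta> \<gamma> = 1 + (real m - 1) / real n + \<beta> / \<alpha> * ((real m - 1) / real m)
      + \<gamma> / \<alpha> * ((real m - 1) / real m - (real m - 1) / real n)"

text \<open>Tight instance: n = m^2 players, group of player i is i div m.\<close>
definition tight_Ep :: "nat \<Rightarrow> nat set set" where
  "tight_Ep m = {{i, j} | i j. i < m^2 \<and> j < m^2 \<and> i \<noteq> j \<and> i div m = j div m}"

definition tight_Em :: "nat \<Rightarrow> nat set set" where
  "tight_Em m = {{i, j} | i j. i < m^2 \<and> j < m^2 \<and> i div m \<noteq> j div m}"

end

theory Submission
  imports Defs "HOL-Analysis.Convex" "HOL-Combinatorics.Transposition"
begin

text \<open>Let every player deviate to a uniformly random machine. Summed over the \<open>m\<close> deviations of a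
  player \<open>i\<close>, every other player shares \<open>i\<close>'s machine exactly once, so the total deviation cost
  \<open>\<alpha> n (m + n - 1) + \<beta> 2|E\<^sup>-| + \<gamma> (m - 1) 2|E\<^sup>+|\<close> does not depend on the current state. Comparing
  it with an optimal state \<open>t\<close>, conflict pairs are at most the conflicts colocated in \<open>t\<close> plus the
  separated pairs, friendship pairs at most the friends separated in \<open>t\<close> plus the colocated pairs,
  and by Cauchy-Schwarz on the loads at least \<open>n\<^sup>2 / m\<close> ordered pairs are colocated; this gives the
  semi-smoothness bounds, and semi-smoothness with \<open>\<mu> = 0\<close> bounds every coarse correlated
  equilibrium. In the tight instance the uniform profile is an equilibrium by the symmetry of the
  machines, its expected cost is the state-independent deviation cost divided by \<open>m\<close>, and the
  optimum, which puts each group on its own machine, meets the load lower bound \<open>\<alpha> m\<^sup>3\<close>.\<close>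

lemma pcost_eq_sum:
  "pcost n Ep Em \<alpha> \<beta> \<gamma> s i =
     (\<Sum>j<n. \<alpha> * of_bool (s j = s i) + \<beta> * of_bool (s j = s i \<and> {i, j} \<in> Em)
             + \<gamma> * of_bool (s j \<noteq> s i \<and> {i, j} \<in> Ep))"
  unfolding pcost_def load_def
  by (simp add: sum.distrib flip: sum_distrib_left) (simp add: lessThan_def Collect_conj_eq)

text \<open>The three counts below range over ordered pairs of players; colocated pairs include \<open>i = j\<close>.\<close>

definition colocated :: "nat \<Rightarrow> (nat \<Rightarrow> nat) \<Rightarrow> real" where
  "colocated n s = (\<Sum>i<n. \<Sum>j<n. of_bool (s j = s i))"

definition colocated_conflicts :: "nat \<Rightarrow> nat set set \<Rightarrow> (nat \<Rightarrow> nat) \<Rightarrow> real" where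
  "colocated_conflicts n Em s = (\<Sum>i<n. \<Sum>j<n. of_bool (s j = s i \<and> {i, j} \<in> Em))"

definition separated_friends :: "nat \<Rightarrow> nat set set \<Rightarrow> (nat \<Rightarrow> nat) \<Rightarrow> real" where
  "separated_friends n Ep s = (\<Sum>i<n. \<Sum>j<n. of_bool (s j \<noteq> s i \<and> {i, j} \<in> Ep))"

lemma social_cost_eq:
  "social_cost n Ep Em \<alpha> \<beta> \<gamma> s =
     \<alpha> * colocated n s + \<beta> * colocated_conflicts n Em s + \<gamma> * separated_friends n Ep s"
  unfolding social_cost_def colocated_def colocated_conflicts_def separated_friends_def pcost_eq_sum
  by (simp only: sum.distrib sum_distrib_left)

lemma states_finite: "finite (states n m)"
  unfolding states_def by (rule finite_PiE) auto

lemma states_nonempty: "m \<ge> 1 \<Longrightarrow> states n m \<noteq> {}"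
  unfolding states_def by (auto simp: PiE_eq_empty_iff lessThan_empty_iff)

lemma card_states: "card (states n m) = m ^ n"
  unfolding states_def by (simp add: card_PiE)

lemma states_less: "s \<in> states n m \<Longrightarrow> j < n \<Longrightarrow> s j < m"
  unfolding states_def by auto

lemma fun_upd_in_states: "s \<in> states n m \<Longrightarrow> i < n \<Longrightarrow> k < m \<Longrightarrow> s(i := k) \<in> states n m"
  unfolding states_def by (auto simp: PiE_def extensional_def)

lemma sum_load:
  assumes "s \<in> states n m"
  shows "(\<Sum>k<m. real (load n s k)) = real n"
proof -
  have "(\<Sum>k<m. real (load n s k)) = (\<Sum>k<m. \<Sum>i<n. of_bool (s i = k))"
    unfolding load_def by (simp add: lessThan_def Collect_conj_eq)
  also have "\<dots> = (\<Sum>i<n. \<Sum>k<m. of_bool (s i = k))"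
    by (rule sum.swap)
  also have "\<dots> = (\<Sum>i<n. 1)"
    using states_less[OF assms] by (intro sum.cong) auto
  finally show ?thesis by simp
qed

lemma colocated_eq_sum_load_squares:
  assumes "s \<in> states n m"
  shows "colocated n s = (\<Sum>k<m. real (load n s k) ^ 2)"
proof -
  have "colocated n s = (\<Sum>i<n. \<Sum>j<n. \<Sum>k<m. of_bool (s i = k) * of_bool (s j = k))"
    unfolding colocated_def
  proof (intro sum.cong refl)
    fix i j assume "i \<in> {..<n}"
    then have "s i < m" using states_less[OF assms] by simp
    have "(\<Sum>k<m. of_bool (s i = k) * of_bool (s j = k))
        = (\<Sum>k<m. if k = s i then of_bool (s j = s i) else 0 :: real)"
      by (intro sum.cong refl) auto
    then show "of_bool (s j = s i) = (\<Sum>k<m. of_bool (s i = k) * of_bool (s j = k) :: real)"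
      using \<open>s i < m\<close> by simp
  qed
  also have "\<dots> = (\<Sum>k<m. (\<Sum>i<n. of_bool (s i = k)) * (\<Sum>j<n. of_bool (s j = k)))"
    by (simp only: sum_product sum.swap[where B = "{..<m}"])
  finally show ?thesis
    unfolding load_def power2_eq_square by (simp add: lessThan_def Collect_conj_eq)
qed

lemma colocated_ge:
  assumes "s \<in> states n m"
  shows "real n ^ 2 \<le> real m * colocated n s"
  using sum_squared_le_sum_of_squares[of "\<lambda>k. real (load n s k)" "{..<m}"]
  by (simp add: sum_load[OF assms] colocated_eq_sum_load_squares[OF assms] mult.commute)

lemma social_cost_ge:
  assumes "s \<in> states n m" and "m \<ge> 1" and "\<alpha> \<ge> 0" "\<beta> \<ge> 0" "\<gamma> \<ge> 0"
  shows "\<alpha> * real n ^ 2 / real m \<le> social_cost n Ep Em \<alpha> \<beta> \<gamma> s"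
proof -
  have "real n ^ 2 / real m \<le> colocated n s"
    using colocated_ge[OF assms(1)] \<open>m \<ge> 1\<close> by (simp add: divide_le_eq mult.commute)
  moreover have "colocated_conflicts n Em s \<ge> 0" "separated_friends n Ep s \<ge> 0"
    unfolding colocated_conflicts_def separated_friends_def by (auto intro: sum_nonneg)
  ultimately show ?thesis
    using assms(3-5) unfolding social_cost_eq
    by (smt (verit) mult_left_mono mult_nonneg_nonneg times_divide_eq_right)
qed

lemma valid_instance_no_loops:
  "valid_instance n m Ep Em \<alpha> \<beta> \<gamma> \<Longrightarrow> {i} \<notin> Em \<and> {i} \<notin> Ep"
  unfolding valid_instance_def by (auto simp: doubleton_eq_iff)

definition degree :: "nat \<Rightarrow> nat set set \<Rightarrow> nat \<Rightarrow> real" where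
  "degree n E i = (\<Sum>j<n. of_bool ({i, j} \<in> E))"

definition deviation_sum ::
    "nat \<Rightarrow> nat \<Rightarrow> nat set set \<Rightarrow> nat set set \<Rightarrow> real \<Rightarrow> real \<Rightarrow> real \<Rightarrow> nat \<Rightarrow> real" where
  "deviation_sum n m Ep Em \<alpha> \<beta> \<gamma> i =
     \<alpha> * (real m + real n - 1) + \<beta> * degree n Em i + \<gamma> * (real m - 1) * degree n Ep i"

lemma sum_pcost_fun_upd:
  assumes s: "s \<in> states n m" and i: "i < n" and loops: "{i} \<notin> Em" "{i} \<notin> Ep"
  shows "(\<Sum>k<m. pcost n Ep Em \<alpha> \<beta> \<gamma> (s(i := k)) i) = deviation_sum n m Ep Em \<alpha> \<beta> \<gamma> i"
proof -
  have pair: "(\<Sum>k<m. \<alpha> * of_bool ((s(i := k)) j = k) + \<beta> * of_bool ((s(i := k)) j = k \<and> {i, j} \<in> Em)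
                + \<gamma> * of_bool ((s(i := k)) j \<noteq> k \<and> {i, j} \<in> Ep))
      = \<alpha> + \<beta> * of_bool ({i, j} \<in> Em) + \<gamma> * (real m - 1) * of_bool ({i, j} \<in> Ep)
        + \<alpha> * (real m - 1) * of_bool (j = i)" if j: "j < n" for j
  proof (cases "j = i")
    case True
    then show ?thesis using loops by (simp add: algebra_simps)
  next
    case False
    have "s j < m" using states_less[OF s j] .
    moreover have "{..<m} \<inter> {k. s j \<noteq> k} = {..<m} - {s j}" by auto
    ultimately have "card ({..<m} \<inter> {k. s j \<noteq> k}) = m - 1" by simp
    then show ?thesis
      using False \<open>s j < m\<close> by (simp add: sum.distrib of_bool_not_iff sum_subtractf flip: sum_distrib_left)
  qed
  have "(\<Sum>k<m. pcost n Ep Em \<alpha> \<beta> \<gamma> (s(i := k)) i)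
      = (\<Sum>j<n. \<Sum>k<m. \<alpha> * of_bool ((s(i := k)) j = k) + \<beta> * of_bool ((s(i := k)) j = k \<and> {i, j} \<in> Em)
                + \<gamma> * of_bool ((s(i := k)) j \<noteq> k \<and> {i, j} \<in> Ep))"
    unfolding pcost_eq_sum fun_upd_same by (rule sum.swap)
  also have "\<dots> = (\<Sum>j<n. \<alpha> + \<beta> * of_bool ({i, j} \<in> Em) + \<gamma> * (real m - 1) * of_bool ({i, j} \<in> Ep)
        + \<alpha> * (real m - 1) * of_bool (j = i))"
    using pair by (intro sum.cong) auto
  also have "\<dots> = deviation_sum n m Ep Em \<alpha> \<beta> \<gamma> i"
    using i unfolding deviation_sum_def degree_def
    by (simp only: sum.distrib flip: sum_distrib_left) (simp add: algebra_simps)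
  finally show ?thesis .
qed

lemma sum_degree_conflicts_le:
  "(\<Sum>i<n. degree n Em i) \<le> colocated_conflicts n Em s + real n ^ 2 - colocated n s"
proof -
  have "(\<Sum>i<n. degree n Em i)
      \<le> (\<Sum>i<n. \<Sum>j<n. of_bool (s j = s i \<and> {i, j} \<in> Em) + (1 - of_bool (s j = s i)))"
    unfolding degree_def by (intro sum_mono) auto
  also have "\<dots> = colocated_conflicts n Em s + real n ^ 2 - colocated n s"
    unfolding colocated_conflicts_def colocated_def
    by (simp only: sum.distrib sum_subtractf) (simp add: power2_eq_square)
  finally show ?thesis .
qed

lemma sum_degree_friends_le:
  assumes "\<And>i. {i} \<notin> Ep"
  shows "(\<Sum>i<n. degree n Ep i) \<le> separated_friends n Ep s + colocated n s - real n"
proof -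
  have "(\<Sum>i<n. degree n Ep i)
      \<le> (\<Sum>i<n. \<Sum>j<n. of_bool (s j \<noteq> s i \<and> {i, j} \<in> Ep) + (of_bool (s j = s i) - of_bool (j = i)))"
    unfolding degree_def using assms by (intro sum_mono) auto
  also have "\<dots> = separated_friends n Ep s + colocated n s - real n"
    unfolding separated_friends_def colocated_def
    by (simp only: sum.distrib sum_subtractf) simp
  finally show ?thesis .
qed

definition Lam' :: "nat \<Rightarrow> real \<Rightarrow> real \<Rightarrow> real \<Rightarrow> real" where
  "Lam' m \<alpha> \<beta> \<gamma> = 1 + \<beta> / \<alpha> * ((real m - 1) / real m) + \<gamma> / \<alpha> * ((real m - 1) / real m)"

lemma Lam_eq_Lam':
  "\<alpha> \<noteq> 0 \<Longrightarrow> Lam n m \<alpha> \<beta> \<gamma> = Lam' m \<alpha> \<beta> \<gamma> + (\<alpha> - \<gamma>) / \<alpha> * ((real m - 1) / real n)"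
  unfolding Lam_def Lam'_def by (cases "m = 0"; cases "n = 0") (simp_all add: field_simps)

lemma sum_deviation_sum_le_counts:
  assumes valid: "valid_instance n m Ep Em \<alpha> \<beta> \<gamma>"
  shows "(\<Sum>i<n. deviation_sum n m Ep Em \<alpha> \<beta> \<gamma> i)
    \<le> \<alpha> * (real m + real n - 1) * real n + \<beta> * (colocated_conflicts n Em t + real n ^ 2 - colocated n t)
      + \<gamma> * (real m - 1) * (separated_friends n Ep t + colocated n t - real n)"
proof -
  have "real m \<ge> 1" "\<alpha> > 0" "\<beta> \<ge> 0" "\<gamma> \<ge> 0"
    using valid unfolding valid_instance_def by auto
  have "(\<Sum>i<n. deviation_sum n m Ep Em \<alpha> \<beta> \<gamma> i)
      = \<alpha> * (real m + real n - 1) * real n + \<beta> * (\<Sum>i<n. degree n Em i)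
        + \<gamma> * (real m - 1) * (\<Sum>i<n. degree n Ep i)"
    unfolding deviation_sum_def by (simp add: sum.distrib sum_distrib_left)
  also have "\<dots> \<le> \<alpha> * (real m + real n - 1) * real n
      + \<beta> * (colocated_conflicts n Em t + real n ^ 2 - colocated n t)
      + \<gamma> * (real m - 1) * (separated_friends n Ep t + colocated n t - real n)"
    using sum_degree_conflicts_le[of n Em t] sum_degree_friends_le[of Ep n t]
      valid_instance_no_loops[OF valid] \<open>real m \<ge> 1\<close> \<open>\<alpha> > 0\<close> \<open>\<beta> \<ge> 0\<close> \<open>\<gamma> \<ge> 0\<close>
    by (intro add_mono mult_left_mono) auto
  finally show ?thesis .
qed

text \<open>The correction term is nonpositive iff \<open>\<alpha> \<le> \<gamma>\<close>; otherwise it is absorbed by the lower bound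
  \<open>\<alpha> n\<^sup>2 / m\<close> on the social cost.\<close>

lemma sum_deviation_sum_le:
  assumes valid: "valid_instance n m Ep Em \<alpha> \<beta> \<gamma>" and t: "t \<in> states n m"
  shows "(\<Sum>i<n. deviation_sum n m Ep Em \<alpha> \<beta> \<gamma> i) / real m
    \<le> Lam' m \<alpha> \<beta> \<gamma> * social_cost n Ep Em \<alpha> \<beta> \<gamma> t + (\<alpha> - \<gamma>) * (real m - 1) * real n / real m"
proof -
  have m: "real m \<ge> 1" and \<alpha>: "\<alpha> > 0" and \<beta>: "\<beta> \<ge> 0" and \<gamma>: "\<gamma> \<ge> 0"
    using valid unfolding valid_instance_def by auto
  define S where "S = colocated n t"
  define C where "C = colocated_conflicts n Em t"
  define F where "F = separated_friends n Ep t"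
  define L where "L = Lam' m \<alpha> \<beta> \<gamma>"
  define U where "U = \<alpha> * (real m + real n - 1) * real n + \<beta> * (C + real n ^ 2 - S)
    + \<gamma> * (real m - 1) * (F + S - real n)"
  have S: "real n ^ 2 / real m \<le> S"
    using colocated_ge[OF t] m unfolding S_def by (simp add: divide_le_eq mult.commute)
  have C: "C \<ge> 0" and F: "F \<ge> 0"
    unfolding C_def F_def colocated_conflicts_def separated_friends_def by (auto intro: sum_nonneg)
  have L: "L \<ge> 1"
    unfolding L_def Lam'_def using \<alpha> \<beta> \<gamma> m
    by (simp add: add_nonneg_nonneg mult_nonneg_nonneg divide_nonneg_nonneg)
  have "L * (\<alpha> * S + \<beta> * C + \<gamma> * F) + (\<alpha> - \<gamma>) * (real m - 1) * real n / real m - U / real m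
      = (S - real n ^ 2 / real m) * (\<alpha> + \<beta>) + \<beta> * C * (L - 1 / real m)
        + \<gamma> * F * (L - (real m - 1) / real m)"
    unfolding L_def Lam'_def U_def using m \<alpha> by (simp add: field_simps power2_eq_square)
  also have "\<dots> \<ge> 0"
  proof -
    have "1 / real m \<le> 1" "(real m - 1) / real m \<le> 1" using m by auto
    then show ?thesis
      using S C F L \<alpha> \<beta> \<gamma> by (intro add_nonneg_nonneg mult_nonneg_nonneg) auto
  qed
  moreover have "(\<Sum>i<n. deviation_sum n m Ep Em \<alpha> \<beta> \<gamma> i) / real m \<le> U / real m"
    using sum_deviation_sum_le_counts[OF valid, of t] m
    unfolding U_def S_def C_def F_def by (simp add: divide_right_mono)
  ultimately show ?thesis
    unfolding social_cost_eq L_def S_def C_def F_def by linarith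
qed

lemma opt_cost_le: "s \<in> states n m \<Longrightarrow> opt_cost n m Ep Em \<alpha> \<beta> \<gamma> \<le> social_cost n Ep Em \<alpha> \<beta> \<gamma> s"
  unfolding opt_cost_def by (simp add: states_finite)

lemma opt_cost_attained:
  assumes "m \<ge> 1"
  obtains s where "s \<in> states n m" "opt_cost n m Ep Em \<alpha> \<beta> \<gamma> = social_cost n Ep Em \<alpha> \<beta> \<gamma> s"
  using Min_in[of "social_cost n Ep Em \<alpha> \<beta> \<gamma> ` states n m"] states_finite states_nonempty[OF assms]
  unfolding opt_cost_def by blast

lemma semi_smooth_uniformI:
  assumes valid: "valid_instance n m Ep Em \<alpha> \<beta> \<gamma>"
    and bound: "\<And>t. t \<in> states n m \<Longrightarrow>
      (\<Sum>i<n. deviation_sum n m Ep Em \<alpha> \<beta> \<gamma> i) / real m \<le> L * social_cost n Ep Em \<alpha> \<beta> \<gamma> t"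
  shows "semi_smooth n m Ep Em \<alpha> \<beta> \<gamma> L 0"
  unfolding semi_smooth_def
proof (intro exI[of _ "\<lambda>i k. 1 / real m"] conjI allI impI ballI)
  have m: "m \<ge> 1" using valid unfolding valid_instance_def by auto
  then show "machine_dist m (\<lambda>k. 1 / real m)" for i
    unfolding machine_dist_def by simp
  obtain t where t: "t \<in> states n m" and opt: "opt_cost n m Ep Em \<alpha> \<beta> \<gamma> = social_cost n Ep Em \<alpha> \<beta> \<gamma> t"
    using opt_cost_attained[OF m] .
  fix s assume s: "s \<in> states n m"
  have "(\<Sum>i<n. \<Sum>k<m. 1 / real m * pcost n Ep Em \<alpha> \<beta> \<gamma> (s(i := k)) i)
      = (\<Sum>i<n. 1 / real m * deviation_sum n m Ep Em \<alpha> \<beta> \<gamma> i)"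
    by (intro sum.cong refl)
      (simp add: sum_pcost_fun_upd[OF s] valid_instance_no_loops[OF valid] flip: sum_divide_distrib)
  also have "\<dots> = (\<Sum>i<n. deviation_sum n m Ep Em \<alpha> \<beta> \<gamma> i) / real m"
    by (simp add: sum_divide_distrib)
  also have "\<dots> \<le> L * opt_cost n m Ep Em \<alpha> \<beta> \<gamma>"
    using bound[OF t] opt by simp
  finally show "(\<Sum>i<n. \<Sum>k<m. 1 / real m * pcost n Ep Em \<alpha> \<beta> \<gamma> (s(i := k)) i)
      \<le> L * opt_cost n m Ep Em \<alpha> \<beta> \<gamma> + 0 * social_cost n Ep Em \<alpha> \<beta> \<gamma> s"
    by simp
qed

lemma semi_smooth_Lam:
  assumes "valid_instance n m Ep Em \<alpha> \<beta> \<gamma>" and "\<gamma> \<le> \<alpha>"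
  shows "semi_smooth n m Ep Em \<alpha> \<beta> \<gamma> (Lam n m \<alpha> \<beta> \<gamma>) 0"
proof (rule semi_smooth_uniformI[OF assms(1)])
  fix t assume t: "t \<in> states n m"
  have n: "real n \<ge> 1" and m: "real m \<ge> 1" and \<alpha>: "\<alpha> > 0" and \<beta>: "\<beta> \<ge> 0" and \<gamma>: "\<gamma> \<ge> 0"
    using assms(1) unfolding valid_instance_def by auto
  have "(\<alpha> - \<gamma>) * (real m - 1) * real n / real m
      = (\<alpha> - \<gamma>) / \<alpha> * ((real m - 1) / real n) * (\<alpha> * real n ^ 2 / real m)"
    using n m \<alpha> by (simp add: field_simps power2_eq_square)
  also have "\<dots> \<le> (\<alpha> - \<gamma>) / \<alpha> * ((real m - 1) / real n) * social_cost n Ep Em \<alpha> \<beta> \<gamma> t"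
    using social_cost_ge[OF t _ _ \<beta> \<gamma>] assms(2) \<alpha> m
    by (intro mult_left_mono mult_nonneg_nonneg divide_nonneg_nonneg) auto
  finally show "(\<Sum>i<n. deviation_sum n m Ep Em \<alpha> \<beta> \<gamma> i) / real m
      \<le> Lam n m \<alpha> \<beta> \<gamma> * social_cost n Ep Em \<alpha> \<beta> \<gamma> t"
    using sum_deviation_sum_le[OF assms(1) t] \<alpha> by (simp add: Lam_eq_Lam' distrib_right)
qed

lemma semi_smooth_Lam':
  assumes "valid_instance n m Ep Em \<alpha> \<beta> \<gamma>" and "\<alpha> < \<gamma>"
  shows "semi_smooth n m Ep Em \<alpha> \<beta> \<gamma> (Lam' m \<alpha> \<beta> \<gamma>) 0"
proof (rule semi_smooth_uniformI[OF assms(1)])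
  fix t assume t: "t \<in> states n m"
  have "(\<alpha> - \<gamma>) * (real m - 1) * real n / real m \<le> 0"
    using assms unfolding valid_instance_def by (auto intro!: divide_nonpos_pos mult_nonpos_nonneg)
  then show "(\<Sum>i<n. deviation_sum n m Ep Em \<alpha> \<beta> \<gamma> i) / real m
      \<le> Lam' m \<alpha> \<beta> \<gamma> * social_cost n Ep Em \<alpha> \<beta> \<gamma> t"
    using sum_deviation_sum_le[OF assms(1) t] by linarith
qed

lemma CCE_expected_cost_le:
  assumes "semi_smooth n m Ep Em \<alpha> \<beta> \<gamma> lam mu" and CCE: "is_CCE n m Ep Em \<alpha> \<beta> \<gamma> w"
  shows "expected n m w (social_cost n Ep Em \<alpha> \<beta> \<gamma>)
    \<le> lam * opt_cost n m Ep Em \<alpha> \<beta> \<gamma> + mu * expected n m w (social_cost n Ep Em \<alpha> \<beta> \<gamma>)"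
proof -
  obtain \<sigma> where \<sigma>: "\<And>i. i < n \<Longrightarrow> machine_dist m (\<sigma> i)"
    and smooth: "\<And>s. s \<in> states n m \<Longrightarrow> (\<Sum>i<n. \<Sum>k<m. \<sigma> i k * pcost n Ep Em \<alpha> \<beta> \<gamma> (s(i := k)) i)
      \<le> lam * opt_cost n m Ep Em \<alpha> \<beta> \<gamma> + mu * social_cost n Ep Em \<alpha> \<beta> \<gamma> s"
    using assms(1) unfolding semi_smooth_def by blast
  have w: "\<And>s. s \<in> states n m \<Longrightarrow> w s \<ge> 0" "(\<Sum>s\<in>states n m. w s) = 1"
    using CCE unfolding is_CCE_def state_dist_def by auto
  define E where "E f = expected n m w f" for f
  have E_sum: "E (\<lambda>s. \<Sum>i\<in>I. f i s) = (\<Sum>i\<in>I. E (f i))" for I :: "nat set" and f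
    unfolding E_def expected_def by (simp add: sum_distrib_left sum.swap[of _ I])
  have E_scale: "E (\<lambda>s. c * f s) = c * E f" for c f
    unfolding E_def expected_def by (simp add: sum_distrib_left mult_ac)
  have E_mono: "E f \<le> E g" if "\<And>s. s \<in> states n m \<Longrightarrow> f s \<le> g s" for f g
    unfolding E_def expected_def using that w by (intro sum_mono mult_left_mono) auto
  have "E (social_cost n Ep Em \<alpha> \<beta> \<gamma>) = (\<Sum>i<n. \<Sum>k<m. \<sigma> i k * E (\<lambda>s. pcost n Ep Em \<alpha> \<beta> \<gamma> s i))"
    using \<sigma> unfolding social_cost_def E_sum machine_dist_def by (simp flip: sum_distrib_right)
  also have "\<dots> \<le> (\<Sum>i<n. \<Sum>k<m. \<sigma> i k * E (\<lambda>s. pcost n Ep Em \<alpha> \<beta> \<gamma> (s(i := k)) i))"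
    using \<sigma> CCE unfolding machine_dist_def is_CCE_def E_def by (intro sum_mono mult_left_mono) auto
  also have "\<dots> = E (\<lambda>s. \<Sum>i<n. \<Sum>k<m. \<sigma> i k * pcost n Ep Em \<alpha> \<beta> \<gamma> (s(i := k)) i)"
    by (simp add: E_sum E_scale)
  also have "\<dots> \<le> E (\<lambda>s. lam * opt_cost n m Ep Em \<alpha> \<beta> \<gamma> + mu * social_cost n Ep Em \<alpha> \<beta> \<gamma> s)"
    by (rule E_mono[OF smooth])
  also have "\<dots> = lam * opt_cost n m Ep Em \<alpha> \<beta> \<gamma> + mu * E (social_cost n Ep Em \<alpha> \<beta> \<gamma>)"
    using w(2) unfolding E_def expected_def by (simp add: algebra_simps sum.distrib flip: sum_distrib_left sum_distrib_right)
  finally show ?thesis unfolding E_def .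
qed

lemma semi_smooth_imp_PoTA_le:
  assumes "semi_smooth n m Ep Em \<alpha> \<beta> \<gamma> lam mu" and "mu < 1"
  shows "PoTA_le n m Ep Em \<alpha> \<beta> \<gamma> (lam / (1 - mu))"
  unfolding PoTA_le_def
proof (intro allI impI)
  fix w assume "is_CCE n m Ep Em \<alpha> \<beta> \<gamma> w"
  from CCE_expected_cost_le[OF assms(1) this] assms(2)
  show "expected n m w (social_cost n Ep Em \<alpha> \<beta> \<gamma>) \<le> lam / (1 - mu) * opt_cost n m Ep Em \<alpha> \<beta> \<gamma>"
    by (simp add: field_simps)
qed

lemma sum_states_fun_upd:
  fixes h :: "(nat \<Rightarrow> nat) \<Rightarrow> real"
  assumes i: "i < n"
  shows "(\<Sum>s\<in>states n m. \<Sum>k<m. h (s(i := k))) = real m * (\<Sum>s\<in>states n m. h s)"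
proof -
  have "(\<Sum>s\<in>states n m. \<Sum>k<m. h (s(i := k))) = (\<Sum>(s, k)\<in>states n m \<times> {..<m}. h (s(i := k)))"
    by (rule sum.cartesian_product)
  also have "\<dots> = (\<Sum>(s, k)\<in>states n m \<times> {..<m}. h s)"
    \<comment> \<open>\<open>(s, k) \<mapsto> (s(i := k), s i)\<close> is an involution of \<open>states n m \<times> {..<m}\<close>\<close>
    by (rule sum.reindex_bij_witness[where i = "\<lambda>(s, k). (s(i := k), s i)" and j = "\<lambda>(s, k). (s(i := k), s i)"])
       (auto simp: fun_upd_in_states states_less i)
  also have "\<dots> = real m * (\<Sum>s\<in>states n m. h s)"
    by (simp add: sum.cartesian_product[symmetric] sum_distrib_left)
  finally show ?thesis .
qed

lemma pcost_relabel_machines: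
  assumes "inj \<pi>" and "i < n"
  shows "pcost n Ep Em \<alpha> \<beta> \<gamma> (restrict (\<pi> \<circ> s) {..<n}) i = pcost n Ep Em \<alpha> \<beta> \<gamma> s i"
  unfolding pcost_eq_sum using assms by (intro sum.cong refl) (simp add: inj_eq)

lemma sum_states_pcost_fun_upd_indep:
  assumes i: "i < n" and "a < m" "b < m"
  shows "(\<Sum>s\<in>states n m. pcost n Ep Em \<alpha> \<beta> \<gamma> (s(i := a)) i)
       = (\<Sum>s\<in>states n m. pcost n Ep Em \<alpha> \<beta> \<gamma> (s(i := b)) i)"
proof -
  define \<tau> where "\<tau> s = restrict (transpose a b \<circ> s) {..<n}" for s
  have \<tau>_states: "\<tau> s \<in> states n m" if "s \<in> states n m" for s
  proof -
    have "transpose a b (s j) < m" if "j < n" for j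
      using states_less[OF \<open>s \<in> states n m\<close> that] assms by (simp add: transpose_def)
    then show ?thesis unfolding \<tau>_def states_def by auto
  qed
  have \<tau>_\<tau>: "\<tau> (\<tau> s) = s" if "s \<in> states n m" for s
    using that unfolding \<tau>_def states_def by (intro ext) (auto simp: PiE_iff extensional_def)
  have "(\<Sum>s\<in>states n m. pcost n Ep Em \<alpha> \<beta> \<gamma> (s(i := b)) i)
      = (\<Sum>s\<in>states n m. pcost n Ep Em \<alpha> \<beta> \<gamma> ((\<tau> s)(i := a)) i)"
  proof (intro sum.cong refl)
    fix s
    have "(\<tau> s)(i := a) = restrict (transpose a b \<circ> s(i := b)) {..<n}"
      using i unfolding \<tau>_def by (auto simp: fun_eq_iff)
    then show "pcost n Ep Em \<alpha> \<beta> \<gamma> (s(i := b)) i = pcost n Ep Em \<alpha> \<beta> \<gamma> ((\<tau> s)(i := a)) i"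
      using pcost_relabel_machines[OF inj_transpose i] by simp
  qed
  also have "\<dots> = (\<Sum>s\<in>states n m. pcost n Ep Em \<alpha> \<beta> \<gamma> (s(i := a)) i)"
    by (rule sum.reindex_bij_witness[where i = \<tau> and j = \<tau>]) (auto simp: \<tau>_states \<tau>_\<tau>)
  finally show ?thesis by simp
qed

lemma sum_states_pcost_fun_upd:
  assumes i: "i < n" and k: "k < m"
  shows "(\<Sum>s\<in>states n m. pcost n Ep Em \<alpha> \<beta> \<gamma> (s(i := k)) i) = (\<Sum>s\<in>states n m. pcost n Ep Em \<alpha> \<beta> \<gamma> s i)"
proof -
  have "real m * (\<Sum>s\<in>states n m. pcost n Ep Em \<alpha> \<beta> \<gamma> (s(i := k)) i)
      = (\<Sum>k'<m. \<Sum>s\<in>states n m. pcost n Ep Em \<alpha> \<beta> \<gamma> (s(i := k')) i)"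
    using sum_states_pcost_fun_upd_indep[OF i _ k] by simp
  also have "\<dots> = real m * (\<Sum>s\<in>states n m. pcost n Ep Em \<alpha> \<beta> \<gamma> s i)"
    by (subst sum.swap) (rule sum_states_fun_upd[OF i])
  finally show ?thesis using k by simp
qed

lemma expected_uniform:
  "expected n m (product_dist n (\<lambda>i k. 1 / real m)) f = (\<Sum>s\<in>states n m. f s) / real m ^ n"
  unfolding expected_def product_dist_def by (simp add: sum_divide_distrib power_one_over)

lemma uniform_is_mixed_NE:
  assumes "m \<ge> 1"
  shows "is_mixed_NE n m Ep Em \<alpha> \<beta> \<gamma> (\<lambda>i k. 1 / real m)"
proof -
  have "state_dist n m (product_dist n (\<lambda>i k. 1 / real m))"
    using assms unfolding state_dist_def product_dist_def by (simp add: card_states power_one_over)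
  then show ?thesis
    using assms unfolding is_mixed_NE_def is_CCE_def machine_dist_def
    by (simp add: expected_uniform sum_states_pcost_fun_upd)
qed

lemma expected_uniform_social_cost:
  assumes valid: "valid_instance n m Ep Em \<alpha> \<beta> \<gamma>"
  shows "expected n m (product_dist n (\<lambda>i k. 1 / real m)) (social_cost n Ep Em \<alpha> \<beta> \<gamma>)
    = (\<Sum>i<n. deviation_sum n m Ep Em \<alpha> \<beta> \<gamma> i) / real m"
proof -
  have m: "real m > 0" using valid unfolding valid_instance_def by auto
  have player: "(\<Sum>s\<in>states n m. pcost n Ep Em \<alpha> \<beta> \<gamma> s i)
      = real m ^ n * deviation_sum n m Ep Em \<alpha> \<beta> \<gamma> i / real m" if i: "i < n" for i
  proof -
    have "real m * (\<Sum>s\<in>states n m. pcost n Ep Em \<alpha> \<beta> \<gamma> s i)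
        = (\<Sum>s\<in>states n m. \<Sum>k<m. pcost n Ep Em \<alpha> \<beta> \<gamma> (s(i := k)) i)"
      by (rule sum_states_fun_upd[OF i, symmetric])
    also have "\<dots> = real m ^ n * deviation_sum n m Ep Em \<alpha> \<beta> \<gamma> i"
      using sum_pcost_fun_upd[OF _ i] valid_instance_no_loops[OF valid] by (simp add: card_states)
    finally show ?thesis using m by (simp add: field_simps)
  qed
  have "(\<Sum>s\<in>states n m. social_cost n Ep Em \<alpha> \<beta> \<gamma> s)
      = real m ^ n * (\<Sum>i<n. deviation_sum n m Ep Em \<alpha> \<beta> \<gamma> i) / real m"
    unfolding social_cost_def
    by (subst sum.swap) (simp add: player sum_distrib_left flip: sum_divide_distrib)
  then show ?thesis
    using m by (simp add: expected_uniform)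
qed

lemma tight_Ep_iff:
  "i < m^2 \<Longrightarrow> j < m^2 \<Longrightarrow> {i, j} \<in> tight_Ep m \<longleftrightarrow> i \<noteq> j \<and> i div m = j div m"
  unfolding tight_Ep_def by (auto simp: doubleton_eq_iff)

lemma tight_Em_iff:
  "i < m^2 \<Longrightarrow> j < m^2 \<Longrightarrow> {i, j} \<in> tight_Em m \<longleftrightarrow> i div m \<noteq> j div m"
  unfolding tight_Em_def by (auto simp: doubleton_eq_iff)

lemma tight_valid:
  assumes "1 \<le> m" "\<alpha> > 0" "\<beta> \<ge> 0" "\<gamma> \<ge> 0"
  shows "valid_instance (m^2) m (tight_Ep m) (tight_Em m) \<alpha> \<beta> \<gamma>"
  using assms unfolding valid_instance_def tight_Ep_def tight_Em_def by (auto simp: doubleton_eq_iff)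

lemma div_less_of_less_square: "(i::nat) < m^2 \<Longrightarrow> i div m < m"
  by (simp add: less_mult_imp_div_less power2_eq_square)

lemma tight_group_eq:
  fixes m g :: nat
  assumes "g < m"
  shows "{j. j < m^2 \<and> j div m = g} = {g * m..<g * m + m}"
proof (rule set_eqI)
  fix j
  have m: "m > 0" using assms by simp
  have "j div m = g \<longleftrightarrow> g \<le> j div m \<and> j div m < Suc g"
    by auto
  also have "\<dots> \<longleftrightarrow> g * m \<le> j \<and> j < g * m + m"
    by (simp only: less_eq_div_iff_mult_less_eq[OF m] div_less_iff_less_mult[OF m] mult_Suc add.commute)
  finally have "j div m = g \<longleftrightarrow> j \<in> {g * m..<g * m + m}"
    by simp
  moreover have "g * m + m \<le> m^2"
    using assms mult_le_mono1[of "Suc g" m m] by (simp add: power2_eq_square)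
  ultimately show "j \<in> {j. j < m^2 \<and> j div m = g} \<longleftrightarrow> j \<in> {g * m..<g * m + m}"
    by auto
qed

lemma card_tight_group: "g < m \<Longrightarrow> card {j. j < m^2 \<and> j div m = g} = m"
  by (simp add: tight_group_eq)

lemma degree_tight_Ep:
  assumes "i < m^2"
  shows "degree (m^2) (tight_Ep m) i = real m - 1"
proof -
  have "{..<m^2} \<inter> {j. {i, j} \<in> tight_Ep m} = {j. j < m^2 \<and> j div m = i div m} - {i}"
    using assms tight_Ep_iff[OF assms assms] by (auto simp: tight_Ep_iff)
  moreover have "m \<ge> 1" using assms by (cases m) auto
  ultimately show ?thesis
    using assms card_tight_group[OF div_less_of_less_square[OF assms]]
    unfolding degree_def by (simp add: of_nat_diff)
qed

lemma degree_tight_Em: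
  assumes "i < m^2"
  shows "degree (m^2) (tight_Em m) i = real m ^ 2 - real m"
proof -
  have "{..<m^2} \<inter> {j. {i, j} \<in> tight_Em m} = {..<m^2} - {j. j < m^2 \<and> j div m = i div m}"
    using assms by (auto simp: tight_Em_iff)
  moreover have "card ({..<m^2} - {j. j < m^2 \<and> j div m = i div m}) = m^2 - m"
    using card_tight_group[OF div_less_of_less_square[OF assms]] by (subst card_Diff_subset) auto
  moreover have "m \<le> m^2" by (simp add: power2_eq_square)
  ultimately show ?thesis
    unfolding degree_def by (simp add: of_nat_diff)
qed

lemma opt_cost_tight:
  assumes "m \<ge> 1" "\<alpha> > 0" "\<beta> \<ge> 0" "\<gamma> \<ge> 0"
  shows "opt_cost (m^2) m (tight_Ep m) (tight_Em m) \<alpha> \<beta> \<gamma> = \<alpha> * real m ^ 3"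
proof (rule antisym)
  define t where "t = restrict (\<lambda>j. j div m) {..<m^2}"
  have t: "t \<in> states (m^2) m"
    unfolding t_def states_def by (auto simp: div_less_of_less_square)
  have "pcost (m^2) (tight_Ep m) (tight_Em m) \<alpha> \<beta> \<gamma> t i = \<alpha> * real m" if i: "i < m^2" for i
  proof -
    have "pcost (m^2) (tight_Ep m) (tight_Em m) \<alpha> \<beta> \<gamma> t i
        = (\<Sum>j<m^2. \<alpha> * of_bool (j div m = i div m))"
      unfolding pcost_eq_sum
    proof (intro sum.cong refl)
      fix j assume "j \<in> {..<m^2}"
      then show "\<alpha> * of_bool (t j = t i) + \<beta> * of_bool (t j = t i \<and> {i, j} \<in> tight_Em m)
          + \<gamma> * of_bool (t j \<noteq> t i \<and> {i, j} \<in> tight_Ep m) = \<alpha> * of_bool (j div m = i div m)"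
        using i tight_Em_iff[OF i, of j] tight_Ep_iff[OF i, of j] by (simp add: t_def)
    qed
    also have "\<dots> = \<alpha> * real (card {j. j < m^2 \<and> j div m = i div m})"
      by (simp add: lessThan_def Collect_conj_eq flip: sum_distrib_left)
    finally show ?thesis using card_tight_group[OF div_less_of_less_square[OF i]] by simp
  qed
  then have "social_cost (m^2) (tight_Ep m) (tight_Em m) \<alpha> \<beta> \<gamma> t = \<alpha> * real m ^ 3"
    unfolding social_cost_def by (simp add: power3_eq_cube power2_eq_square)
  with opt_cost_le[OF t, of "tight_Ep m" "tight_Em m" \<alpha> \<beta> \<gamma>]
  show "opt_cost (m^2) m (tight_Ep m) (tight_Em m) \<alpha> \<beta> \<gamma> \<le> \<alpha> * real m ^ 3"
    by simp
  obtain s where s: "s \<in> states (m^2) m"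
    and opt: "opt_cost (m^2) m (tight_Ep m) (tight_Em m) \<alpha> \<beta> \<gamma>
      = social_cost (m^2) (tight_Ep m) (tight_Em m) \<alpha> \<beta> \<gamma> s"
    using opt_cost_attained[OF assms(1)] .
  have "\<alpha> * real m ^ 3 = \<alpha> * real (m^2) ^ 2 / real m"
    using assms(1) by (simp add: power2_eq_square power3_eq_cube)
  also have "\<dots> \<le> opt_cost (m^2) m (tight_Ep m) (tight_Em m) \<alpha> \<beta> \<gamma>"
    unfolding opt using social_cost_ge[OF s assms(1)] assms(2-4) by simp
  finally show "\<alpha> * real m ^ 3 \<le> opt_cost (m^2) m (tight_Ep m) (tight_Em m) \<alpha> \<beta> \<gamma>" .
qed

lemma tight_expected_cost:
  assumes "m \<ge> 1" "\<alpha> > 0" "\<beta> \<ge> 0" "\<gamma> \<ge> 0"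
  shows "expected (m^2) m (product_dist (m^2) (\<lambda>i k. 1 / real m))
      (social_cost (m^2) (tight_Ep m) (tight_Em m) \<alpha> \<beta> \<gamma>)
    = Lam (m^2) m \<alpha> \<beta> \<gamma> * opt_cost (m^2) m (tight_Ep m) (tight_Em m) \<alpha> \<beta> \<gamma>"
proof -
  define X where "X = \<alpha> * (real m + real m ^ 2 - 1) + \<beta> * (real m ^ 2 - real m)
    + \<gamma> * (real m - 1) * (real m - 1)"
  have "(\<Sum>i<m^2. deviation_sum (m^2) m (tight_Ep m) (tight_Em m) \<alpha> \<beta> \<gamma> i) = (\<Sum>i<m^2. X)"
    unfolding deviation_sum_def X_def
    by (intro sum.cong refl) (simp add: degree_tight_Ep degree_tight_Em)
  moreover have "real (m^2) * X / real m = Lam (m^2) m \<alpha> \<beta> \<gamma> * (\<alpha> * real m ^ 3)"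
    unfolding X_def Lam_def using assms(1,2)
    by (simp add: field_simps power2_eq_square power3_eq_cube)
  ultimately show ?thesis
    using expected_uniform_social_cost[OF tight_valid[OF assms]] opt_cost_tight[OF assms] by simp
qed

theorem theorem11:
  shows
  "(\<forall>n m Ep Em \<alpha> \<beta> \<gamma>. valid_instance n m Ep Em \<alpha> \<beta> \<gamma> \<and> \<alpha> \<ge> \<gamma> \<longrightarrow>
      semi_smooth n m Ep Em \<alpha> \<beta> \<gamma> (Lam n m \<alpha> \<beta> \<gamma>) 0 \<and>
      PoTA_le n m Ep Em \<alpha> \<beta> \<gamma> (Lam n m \<alpha> \<beta> \<gamma>))
   \<and>
   (\<forall>m \<alpha> \<beta> \<gamma>. 1 \<le> m \<and> \<alpha> > 0 \<and> \<beta> \<ge> 0 \<and> \<gamma> \<ge> 0 \<and> \<alpha> \<ge> \<gamma> \<longrightarrow>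
      (let n = m^2; Ep = tight_Ep m; Em = tight_Em m; \<sigma> = (\<lambda>i k. 1 / real m) in
        valid_instance n m Ep Em \<alpha> \<beta> \<gamma> \<and>
        is_mixed_NE n m Ep Em \<alpha> \<beta> \<gamma> \<sigma> \<and>
        expected n m (product_dist n \<sigma>) (social_cost n Ep Em \<alpha> \<beta> \<gamma>)
          = Lam n m \<alpha> \<beta> \<gamma> * opt_cost n m Ep Em \<alpha> \<beta> \<gamma>))
   \<and>
   (\<forall>n m Ep Em \<alpha> \<beta> \<gamma>. valid_instance n m Ep Em \<alpha> \<beta> \<gamma> \<and> \<alpha> < \<gamma> \<longrightarrow>
      semi_smooth n m Ep Em \<alpha> \<beta> \<gamma>
        (1 + \<beta> / \<alpha> * ((real m - 1) / real m) + \<gamma> / \<alpha> * ((real m - 1) / real m)) 0)"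
proof (intro conjI allI impI)
  fix n m Ep Em \<alpha> \<beta> \<gamma>
  assume "valid_instance n m Ep Em \<alpha> \<beta> \<gamma> \<and> \<gamma> \<le> \<alpha>"
  then have smooth: "semi_smooth n m Ep Em \<alpha> \<beta> \<gamma> (Lam n m \<alpha> \<beta> \<gamma>) 0"
    using semi_smooth_Lam by blast
  then show "semi_smooth n m Ep Em \<alpha> \<beta> \<gamma> (Lam n m \<alpha> \<beta> \<gamma>) 0" .
  show "PoTA_le n m Ep Em \<alpha> \<beta> \<gamma> (Lam n m \<alpha> \<beta> \<gamma>)"
    using semi_smooth_imp_PoTA_le[OF smooth] by simp
next
  fix m :: nat and \<alpha> \<beta> \<gamma> :: real
  assume "1 \<le> m \<and> \<alpha> > 0 \<and> \<beta> \<ge> 0 \<and> \<gamma> \<ge> 0 \<and> \<gamma> \<le> \<alpha>"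
  then show "let n = m^2; Ep = tight_Ep m; Em = tight_Em m; \<sigma> = (\<lambda>i k. 1 / real m) in
        valid_instance n m Ep Em \<alpha> \<beta> \<gamma> \<and>
        is_mixed_NE n m Ep Em \<alpha> \<beta> \<gamma> \<sigma> \<and>
        expected n m (product_dist n \<sigma>) (social_cost n Ep Em \<alpha> \<beta> \<gamma>)
          = Lam n m \<alpha> \<beta> \<gamma> * opt_cost n m Ep Em \<alpha> \<beta> \<gamma>"
    using tight_valid uniform_is_mixed_NE tight_expected_cost by (simp add: Let_def)
next
  fix n m Ep Em \<alpha> \<beta> \<gamma>
  assume "valid_instance n m Ep Em \<alpha> \<beta> \<gamma> \<and> \<alpha> < \<gamma>"
  then show "semi_smooth n m Ep Em \<alpha> \<beta> \<gamma>
        (1 + \<beta> / \<alpha> * ((real m - 1) / real m) + \<gamma> / \<alpha> * ((real m - 1) / real m)) 0"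
    using semi_smooth_Lam' unfolding Lam'_def by blast
qed

end
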